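(* Let $N^{[0]}$ be a $C^0$ net on the grid $T^{[0]}$ with lines $s^{[0]}_i=t^{[0]}_i=i$, $i\in\mathbb{Z}$, having the BMSDD property with constant $L$, and let $N^{[k]}$ on grids $T^{[k]}$ (lines $s^{[k]}_i$, $t^{[k]}_j$), $k\ge0$, be generated by the corner cutting algorithm for nets of functions (described in the context) with weights $\boldsymbol{\gamma}^{[s],[k]},\boldsymbol{\gamma}^{[t],[k]}\in\mathscr{W}$. Then for every $k\ge0$, $$\|\mathcal{C}(N^{[k+1]})-\mathcal{C}(N^{[k]})\|_\infty\le 3^{k+1}L\,\frac{h_s^{[k+1]}h_t^{[k+1]}}{4},$$ where $h_s^{[k+1]}=\sup_{i\in\mathbb{Z}}(s^{[k+1]}_{i+1}-s^{[k+1]}_i)$, $h_t^{[k+1]}=\sup_{i\in\mathbb{Z}}(t^{[k+1]}_{i+1}-t^{[k+1]}_i)$, and the norm on the left is the supremum over $\mathbb{R}^2$.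
   Context: $\mathscr{W}$ is the set of pairs $(\boldsymbol{\alpha},\boldsymbol{\beta})$ of real bi-infinite sequences with $\inf_i\min\{\alpha_i,1-\beta_i,\beta_i-\alpha_i\}>0$. For strictly increasing bi-infinite real sequences $(s_i)$, $(t_j)$, unbounded above and below, the grid is $T=\bigcup_i\{s_i\}\times\mathbb{R}\cup\bigcup_j\mathbb{R}\times\{t_j\}$. A net $N(T)$ is a function on $T$ with values in $\mathbb{R}^m$; it is $C^0$ if all u-functions $s\mapsto N(s,t_j)$, $t\mapsto N(s_i,t)$ are continuous. The piecewise Coons patch $\mathcal{C}(N)$ is defined on each rectangle $[s_i,s_{i+1}]\times[t_j,t_{j+1}]$, with $h_1=s_{i+1}-s_i$, $h_2=t_{j+1}-t_j$, by $\mathcal{C}(N)(s,t)=\frac{s_{i+1}-s}{h_1}N(s_i,t)+\frac{s-s_i}{h_1}N(s_{i+1},t)+\frac{t_{j+1}-t}{h_2}N(s,t_j)+\frac{t-t_j}{h_2}N(s,t_{j+1})-B(s,t)$, with $B(s,t)=\frac{s_{i+1}-s}{h_1}\big(\frac{t_{j+1}-t}{h_2}N(s_i,t_j)+\frac{t-t_j}{h_2}N(s_i,t_{j+1})\big)+\frac{s-s_i}{h_1}\big(\frac{t_{j+1}-t}{h_2}N(s_{i+1},t_j)+\frac{t-t_j}{h_2}N(s_{i+1},t_{j+1})\big)$. Algorithm: given $N^{[k]}$ on grid $T^{[k]}$ with lines $s^{[k]}_i,t^{[k]}_j$, set $s^{[k+1]}_{2i}=(1-\alpha^{[s],[k]}_i)s^{[k]}_i+\alpha^{[s],[k]}_is^{[k]}_{i+1}$,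 $s^{[k+1]}_{2i+1}=(1-\beta^{[s],[k]}_i)s^{[k]}_i+\beta^{[s],[k]}_is^{[k]}_{i+1}$, and analogously for $t^{[k+1]}$ with $\boldsymbol{\gamma}^{[t],[k]}=(\boldsymbol{\alpha}^{[t],[k]},\boldsymbol{\beta}^{[t],[k]})$; $T^{[k+1]}$ is the grid with these lines and $N^{[k+1]}=\mathcal{C}(N^{[k]})|_{T^{[k+1]}}$. For $\sigma_1\ne\sigma_2$, $\tau_1\ne\tau_2$, $[\sigma_1,\sigma_2;\tau_1,\tau_2]N=\frac{N(\sigma_1,\tau_1)+N(\sigma_2,\tau_2)-N(\sigma_2,\tau_1)-N(\sigma_1,\tau_2)}{(\sigma_1-\sigma_2)(\tau_1-\tau_2)}$; a net on a grid has the BMSDD property with constant $L$ if $\|[\sigma_1,\sigma_2;\tau_1,\tau_2]N\|_\infty\le L$ whenever all four points $(\sigma_i,\tau_j)$ lie on the grid. *)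

theory Defs
  imports "HOL-Analysis.Analysis"
begin

definition grid_lines :: "(int \<Rightarrow> real) \<Rightarrow> bool" where
  "grid_lines s \<longleftrightarrow> (\<forall>i. s i < s (i + 1)) \<and> (\<forall>x. \<exists>i. s i > x) \<and> (\<forall>x. \<exists>i. s i < x)"

definition grid :: "(int \<Rightarrow> real) \<Rightarrow> (int \<Rightarrow> real) \<Rightarrow> (real \<times> real) set" where
  "grid s t = {(x, y). (\<exists>i. x = s i) \<or> (\<exists>j. y = t j)}"

definition weights_W :: "(int \<Rightarrow> real) \<Rightarrow> (int \<Rightarrow> real) \<Rightarrow> bool" where
  "weights_W \<alpha> \<beta> \<longleftrightarrow> (\<exists>\<delta>>0. \<forall>i. \<delta> \<le> \<alpha> i \<and> \<delta> \<le> 1 - \<beta> i \<and> \<delta> \<le> \<beta> i - \<alpha> i)"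

text \<open>A net (values only relevant on the grid) is C^0 if all u-functions are continuous.\<close>
definition net_C0 :: "(int \<Rightarrow> real) \<Rightarrow> (int \<Rightarrow> real) \<Rightarrow> (real \<times> real \<Rightarrow> 'a::real_normed_vector) \<Rightarrow> bool" where
  "net_C0 s t N \<longleftrightarrow> (\<forall>j. continuous_on UNIV (\<lambda>x. N (x, t j))) \<and> (\<forall>i. continuous_on UNIV (\<lambda>y. N (s i, y)))"

definition div_diff :: "real \<Rightarrow> real \<Rightarrow> real \<Rightarrow> real \<Rightarrow> (real \<times> real \<Rightarrow> 'a::real_normed_vector) \<Rightarrow> 'a" where
  "div_diff \<sigma>1 \<sigma>2 \<tau>1 \<tau>2 N =
     (1 / ((\<sigma>1 - \<sigma>2) * (\<tau>1 - \<tau>2))) *\<^sub>R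
       (N (\<sigma>1, \<tau>1) + N (\<sigma>2, \<tau>2) - N (\<sigma>2, \<tau>1) - N (\<sigma>1, \<tau>2))"

definition BMSDD :: "(int \<Rightarrow> real) \<Rightarrow> (int \<Rightarrow> real) \<Rightarrow> (real \<times> real \<Rightarrow> 'a::euclidean_space) \<Rightarrow> real \<Rightarrow> bool" where
  "BMSDD s t N L \<longleftrightarrow>
     (\<forall>\<sigma>1 \<sigma>2 \<tau>1 \<tau>2. \<sigma>1 \<noteq> \<sigma>2 \<and> \<tau>1 \<noteq> \<tau>2 \<and>
        (\<sigma>1, \<tau>1) \<in> grid s t \<and> (\<sigma>1, \<tau>2) \<in> grid s t \<and>
        (\<sigma>2, \<tau>1) \<in> grid s t \<and> (\<sigma>2, \<tau>2) \<in> grid s t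
        \<longrightarrow> infnorm (div_diff \<sigma>1 \<sigma>2 \<tau>1 \<tau>2 N) \<le> L)"

definition cell_idx :: "(int \<Rightarrow> real) \<Rightarrow> real \<Rightarrow> int" where
  "cell_idx s x = (THE i. s i \<le> x \<and> x < s (i + 1))"

text \<open>Piecewise Coons patch (on cell boundaries adjacent patches agree).\<close>
definition coons :: "(int \<Rightarrow> real) \<Rightarrow> (int \<Rightarrow> real) \<Rightarrow> (real \<times> real \<Rightarrow> 'a::real_vector) \<Rightarrow> real \<times> real \<Rightarrow> 'a" where
  "coons s t N = (\<lambda>(x, y).
     let i = cell_idx s x; j = cell_idx t y;
         h1 = s (i + 1) - s i; h2 = t (j + 1) - t j;
         a0 = (s (i + 1) - x) / h1; a1 = (x - s i) / h1;
         b0 = (t (j + 1) - y) / h2; b1 = (y - t j) / h2;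
         B = a0 *\<^sub>R (b0 *\<^sub>R N (s i, t j) + b1 *\<^sub>R N (s i, t (j + 1)))
           + a1 *\<^sub>R (b0 *\<^sub>R N (s (i + 1), t j) + b1 *\<^sub>R N (s (i + 1), t (j + 1)))
     in a0 *\<^sub>R N (s i, y) + a1 *\<^sub>R N (s (i + 1), y)
        + b0 *\<^sub>R N (x, t j) + b1 *\<^sub>R N (x, t (j + 1)) - B)"

primrec cc_lines :: "(nat \<Rightarrow> int \<Rightarrow> real) \<Rightarrow> (nat \<Rightarrow> int \<Rightarrow> real) \<Rightarrow> (int \<Rightarrow> real) \<Rightarrow> nat \<Rightarrow> int \<Rightarrow> real" where
  "cc_lines \<alpha> \<beta> s0 0 = s0"
| "cc_lines \<alpha> \<beta> s0 (Suc k) = (\<lambda>n. let i = n div 2; s = cc_lines \<alpha> \<beta> s0 k in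
      if even n then (1 - \<alpha> k i) * s i + \<alpha> k i * s (i + 1)
      else (1 - \<beta> k i) * s i + \<beta> k i * s (i + 1))"

text \<open>Nets N^[k]: N^[k+1] = C(N^[k]) restricted to T^[k+1] (values off the grid are
  irrelevant; we keep the whole Coons patch).\<close>
primrec cc_net :: "(nat \<Rightarrow> int \<Rightarrow> real) \<Rightarrow> (nat \<Rightarrow> int \<Rightarrow> real) \<Rightarrow> (nat \<Rightarrow> int \<Rightarrow> real) \<Rightarrow> (nat \<Rightarrow> int \<Rightarrow> real)
    \<Rightarrow> (int \<Rightarrow> real) \<Rightarrow> (int \<Rightarrow> real) \<Rightarrow> (real \<times> real \<Rightarrow> 'a::real_vector) \<Rightarrow> nat \<Rightarrow> real \<times> real \<Rightarrow> 'a" where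
  "cc_net \<alpha>s \<beta>s \<alpha>t \<beta>t s0 t0 N0 0 = N0"
| "cc_net \<alpha>s \<beta>s \<alpha>t \<beta>t s0 t0 N0 (Suc k) =
     coons (cc_lines \<alpha>s \<beta>s s0 k) (cc_lines \<alpha>t \<beta>t t0 k) (cc_net \<alpha>s \<beta>s \<alpha>t \<beta>t s0 t0 N0 k)"

definition max_step :: "(int \<Rightarrow> real) \<Rightarrow> real" where
  "max_step s = (SUP i. s (i + 1) - s i)"

end

theory Submission
  imports Defs
begin

(* Fix one coordinate of the net and write rect_diff F a b c d = F(a,c) + F(b,d) - F(b,c) - F(a,d).
   BMSDD with constant L bounds |rect_diff N| by L |a - b| |c - d| on rectangles two of whose
   parallel sides lie on grid lines. On one cell, rect_diff of the Coons patch C(N) is a combination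
   of three such mixed differences of N, hence bounded by 3 L |a - b| |c - d|; as a function of one
   variable that is Lipschitz on every cell of a grid is Lipschitz on the whole line, the bound
   extends to all rectangles. By induction N^[k+1] = C(N^[k]) has constant 3^(k+1) L on all
   rectangles. Finally, on a cell F - C(F) is a convex combination of the mixed differences of F
   between (x, y) and the four corners, so |C(F) - F| <= K h_s h_t / 4 when K bounds rect_diff F;
   apply this to F = N^[k+1]. *)

section \<open>Cells of a grid\<close>

lemma grid_lines_strict_mono:
  assumes "grid_lines s"
  shows "strict_mono s"
proof (rule strict_monoI)
  have step: "s i < s (i + 1)" for i
    using assms by (simp add: grid_lines_def)
  fix i j :: int
  assume "i < j"
  then have "i + 1 \<le> j" by simp
  then show "s i < s j"
    by (induction j rule: int_ge_induct) (use step order.strict_trans in blast)+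
qed

lemma grid_lines_of_int: "grid_lines real_of_int"
  unfolding grid_lines_def
proof (intro conjI allI)
  fix x :: real
  show "\<exists>i. real_of_int i > x" by (intro exI[of _ "\<lceil>x\<rceil> + 1"]) linarith
  show "\<exists>i. real_of_int i < x" by (intro exI[of _ "\<lfloor>x\<rfloor> - 1"]) linarith
qed simp

lemma grid_lines_cell_exists:
  assumes "grid_lines s"
  shows "\<exists>i. s i \<le> x \<and> x < s (i + 1)"
proof -
  obtain a b where a: "s a < x" and b: "x < s b"
    using assms unfolding grid_lines_def by blast
  define I where "I = {i \<in> {a..b}. s i \<le> x}"
  have "a < b"
    using a b strict_mono_less[OF grid_lines_strict_mono[OF assms]] by fastforce
  then have "a \<in> I" "finite I"
    using a by (auto simp: I_def intro: finite_subset[of _ "{a..b}"])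
  then have "Max I \<in> I" and Max_ge: "\<And>i. i \<in> I \<Longrightarrow> i \<le> Max I"
    by (auto intro: Max_in)
  moreover have "\<not> s (Max I + 1) \<le> x"
  proof
    assume "s (Max I + 1) \<le> x"
    moreover have "Max I + 1 \<le> b"
      using \<open>Max I \<in> I\<close> b by (cases "Max I = b") (auto simp: I_def)
    ultimately have "Max I + 1 \<in> I"
      using \<open>Max I \<in> I\<close> by (auto simp: I_def)
    then show False using Max_ge by fastforce
  qed
  ultimately show ?thesis by (auto simp: I_def)
qed

lemma cell_idx_eq:
  assumes "grid_lines s" "s i \<le> x" "x < s (i + 1)"
  shows "cell_idx s x = i"
  unfolding cell_idx_def
proof (rule the_equality)
  fix j assume "s j \<le> x \<and> x < s (j + 1)"
  with assms have "i < j + 1" "j < i + 1"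
    using strict_mono_less[OF grid_lines_strict_mono[OF assms(1)]] by fastforce+
  then show "j = i" by simp
qed (use assms in simp)

lemma cell_idx_bounds:
  assumes "grid_lines s"
  shows "s (cell_idx s x) \<le> x" "x < s (cell_idx s x + 1)"
  using grid_lines_cell_exists[OF assms, of x] cell_idx_eq[OF assms] by auto

section \<open>Mixed differences of the Coons patch\<close>

definition rect_diff :: "(real \<times> real \<Rightarrow> real) \<Rightarrow> real \<Rightarrow> real \<Rightarrow> real \<Rightarrow> real \<Rightarrow> real" where
  "rect_diff F a b c d = F (a, c) + F (b, d) - F (b, c) - F (a, d)"

(* The patch formula of coons with the cell fixed, so that it can be evaluated on the closed cell. *)
definition coons_cell ::
    "(int \<Rightarrow> real) \<Rightarrow> (int \<Rightarrow> real) \<Rightarrow> (real \<times> real \<Rightarrow> real) \<Rightarrow> int \<Rightarrow> int \<Rightarrow> real \<times> real \<Rightarrow> real" where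
  "coons_cell s t N i j = (\<lambda>(x, y).
     let h1 = s (i + 1) - s i; h2 = t (j + 1) - t j;
         a0 = (s (i + 1) - x) / h1; a1 = (x - s i) / h1;
         b0 = (t (j + 1) - y) / h2; b1 = (y - t j) / h2
     in a0 * N (s i, y) + a1 * N (s (i + 1), y) + b0 * N (x, t j) + b1 * N (x, t (j + 1))
        - (a0 * (b0 * N (s i, t j) + b1 * N (s i, t (j + 1)))
           + a1 * (b0 * N (s (i + 1), t j) + b1 * N (s (i + 1), t (j + 1)))))"

lemma coons_eq_coons_cell:
  "coons s t N (x, y) = coons_cell s t N (cell_idx s x) (cell_idx t y) (x, y)"
  by (simp add: coons_def coons_cell_def Let_def)

lemma coons_cell_at_s_lines:
  assumes "s (i + 1) \<noteq> s i"
  shows "coons_cell s t N i j (s i, y) = N (s i, y)"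
    and "coons_cell s t N i j (s (i + 1), y) = N (s (i + 1), y)"
  using assms by (simp_all add: coons_cell_def Let_def)

lemma coons_cell_at_t_lines:
  assumes "t (j + 1) \<noteq> t j"
  shows "coons_cell s t N i j (x, t j) = N (x, t j)"
    and "coons_cell s t N i j (x, t (j + 1)) = N (x, t (j + 1))"
  using assms by (simp_all add: coons_cell_def Let_def)

lemma coons_eq_coons_cell_closed:
  assumes s: "grid_lines s" and t: "grid_lines t"
    and "s i \<le> x" "x \<le> s (i + 1)" "t j \<le> y" "y \<le> t (j + 1)"
  shows "coons s t N (x, y) = coons_cell s t N i j (x, y)"
proof -
  have s_step: "s k < s (k + 1)" and t_step: "t k < t (k + 1)" for k
    using s t by (simp_all add: grid_lines_def)
  consider "x = s (i + 1)" | "y = t (j + 1)" | "x < s (i + 1)" "y < t (j + 1)"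
    using assms by linarith
  then show ?thesis
  proof cases
    case 1
    then have "cell_idx s x = i + 1"
      using cell_idx_eq[OF s, of "i + 1"] s_step[of "i + 1"] by simp
    then show ?thesis
      using 1 s_step[of i] s_step[of "i + 1"]
      by (simp add: coons_eq_coons_cell coons_cell_at_s_lines)
  next
    case 2
    then have "cell_idx t y = j + 1"
      using cell_idx_eq[OF t, of "j + 1"] t_step[of "j + 1"] by simp
    then show ?thesis
      using 2 t_step[of j] t_step[of "j + 1"]
      by (simp add: coons_eq_coons_cell coons_cell_at_t_lines)
  next
    case 3
    then show ?thesis
      using assms cell_idx_eq[OF s] cell_idx_eq[OF t] by (simp add: coons_eq_coons_cell)
  qed
qed

lemma rect_diff_coons_cell:
  "rect_diff (coons_cell s t N i j) x1 x2 y1 y2 =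
     (x1 - x2) / (s (i + 1) - s i) * rect_diff N (s (i + 1)) (s i) y1 y2
     + (y1 - y2) / (t (j + 1) - t j) * rect_diff N x1 x2 (t (j + 1)) (t j)
     - (x1 - x2) * (y1 - y2) / ((s (i + 1) - s i) * (t (j + 1) - t j))
       * rect_diff N (s (i + 1)) (s i) (t (j + 1)) (t j)"
  unfolding rect_diff_def coons_cell_def Let_def
  by (simp only: divide_inverse inverse_mult_distrib) (simp add: algebra_simps)

definition rect_lipschitz :: "real \<Rightarrow> (real \<times> real \<Rightarrow> real) \<Rightarrow> bool" where
  "rect_lipschitz M F \<longleftrightarrow> (\<forall>a b c d. \<bar>rect_diff F a b c d\<bar> \<le> M * \<bar>a - b\<bar> * \<bar>c - d\<bar>)"

definition grid_rect_lipschitz ::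
    "(int \<Rightarrow> real) \<Rightarrow> (int \<Rightarrow> real) \<Rightarrow> real \<Rightarrow> (real \<times> real \<Rightarrow> real) \<Rightarrow> bool" where
  "grid_rect_lipschitz s t M F \<longleftrightarrow>
     (\<forall>i1 i2 c d. \<bar>rect_diff F (s i1) (s i2) c d\<bar> \<le> M * \<bar>s i1 - s i2\<bar> * \<bar>c - d\<bar>) \<and>
     (\<forall>a b j1 j2. \<bar>rect_diff F a b (t j1) (t j2)\<bar> \<le> M * \<bar>a - b\<bar> * \<bar>t j1 - t j2\<bar>)"

lemma rect_lipschitz_imp_grid_rect_lipschitz:
  "rect_lipschitz M F \<Longrightarrow> grid_rect_lipschitz s t M F"
  unfolding rect_lipschitz_def grid_rect_lipschitz_def by blast

lemma abs_divide_mult_le: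
  fixes d h R C :: real
  assumes "h \<noteq> 0" "\<bar>R\<bar> \<le> \<bar>h\<bar> * C"
  shows "\<bar>d / h * R\<bar> \<le> \<bar>d\<bar> * C"
proof -
  have "\<bar>d / h * R\<bar> = \<bar>d\<bar> / \<bar>h\<bar> * \<bar>R\<bar>" by (simp add: abs_mult)
  also have "\<dots> \<le> \<bar>d\<bar> / \<bar>h\<bar> * (\<bar>h\<bar> * C)" using assms(2) by (intro mult_left_mono) auto
  also have "\<dots> = \<bar>d\<bar> * C" using assms(1) by simp
  finally show ?thesis .
qed

lemma rect_lipschitz_coons_cell:
  assumes N: "grid_rect_lipschitz s t M N" and "s (i + 1) \<noteq> s i" "t (j + 1) \<noteq> t j"
  shows "rect_lipschitz (3 * M) (coons_cell s t N i j)"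
  unfolding rect_lipschitz_def
proof (intro allI)
  fix x1 x2 y1 y2
  let ?h1 = "s (i + 1) - s i" and ?h2 = "t (j + 1) - t j"
  have h: "?h1 \<noteq> 0" "?h2 \<noteq> 0" "?h1 * ?h2 \<noteq> 0" using assms(2,3) by simp_all
  have "\<bar>rect_diff N (s (i + 1)) (s i) y1 y2\<bar> \<le> \<bar>?h1\<bar> * (M * \<bar>y1 - y2\<bar>)"
    using N unfolding grid_rect_lipschitz_def by (simp add: mult_ac)
  from abs_divide_mult_le[OF h(1) this, of "x1 - x2"]
  have 1: "\<bar>(x1 - x2) / ?h1 * rect_diff N (s (i + 1)) (s i) y1 y2\<bar> \<le> M * \<bar>x1 - x2\<bar> * \<bar>y1 - y2\<bar>"
    by (simp add: mult_ac)
  have "\<bar>rect_diff N x1 x2 (t (j + 1)) (t j)\<bar> \<le> \<bar>?h2\<bar> * (M * \<bar>x1 - x2\<bar>)"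
    using N unfolding grid_rect_lipschitz_def by (simp add: mult_ac)
  from abs_divide_mult_le[OF h(2) this, of "y1 - y2"]
  have 2: "\<bar>(y1 - y2) / ?h2 * rect_diff N x1 x2 (t (j + 1)) (t j)\<bar> \<le> M * \<bar>x1 - x2\<bar> * \<bar>y1 - y2\<bar>"
    by (simp add: mult_ac)
  have "\<bar>rect_diff N (s (i + 1)) (s i) (t (j + 1)) (t j)\<bar> \<le> \<bar>?h1 * ?h2\<bar> * M"
    using N unfolding grid_rect_lipschitz_def by (simp add: abs_mult mult_ac)
  from abs_divide_mult_le[OF h(3) this, of "(x1 - x2) * (y1 - y2)"]
  have 3: "\<bar>(x1 - x2) * (y1 - y2) / (?h1 * ?h2) * rect_diff N (s (i + 1)) (s i) (t (j + 1)) (t j)\<bar>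
      \<le> M * \<bar>x1 - x2\<bar> * \<bar>y1 - y2\<bar>"
    by (simp add: abs_mult mult_ac)
  have triangle: "\<bar>A + B - C\<bar> \<le> 3 * K" if "\<bar>A\<bar> \<le> K" "\<bar>B\<bar> \<le> K" "\<bar>C\<bar> \<le> K" for A B C K :: real
    using that by linarith
  show "\<bar>rect_diff (coons_cell s t N i j) x1 x2 y1 y2\<bar> \<le> 3 * M * \<bar>x1 - x2\<bar> * \<bar>y1 - y2\<bar>"
    unfolding rect_diff_coons_cell using triangle[OF 1 2 3] by (simp add: mult.assoc)
qed

lemma lipschitz_on_UNIV_if_lipschitz_on_cells:
  fixes g :: "real \<Rightarrow> 'a::metric_space"
  assumes s: "grid_lines s" and cells: "\<And>i. K-lipschitz_on {s i..s (i + 1)} g"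
  shows "K-lipschitz_on UNIV g"
proof (rule lipschitz_onI)
  show K: "0 \<le> K" using lipschitz_on_nonneg[OF cells] .
  have span: "K-lipschitz_on {s i..s j} g" if "i \<le> j" for i j
    using that
  proof (induction j rule: int_ge_induct)
    case base
    show ?case using K by (intro lipschitz_onI) auto
  next
    case (step j)
    from lipschitz_on_concat[OF step.IH cells refl] show ?case by simp
  qed
  fix x y :: real
  obtain i j where i: "s i < min x y" and j: "max x y < s j"
    using s unfolding grid_lines_def by blast
  then have "s i < s j" by linarith
  then have "i \<le> j"
    using strict_mono_less[OF grid_lines_strict_mono[OF s]] by simp
  with i j show "dist (g x) (g y) \<le> K * dist x y"
    by (intro lipschitz_onD[OF span]) auto
qed

lemma dist_diff_rect_diff:
  "dist (F (a, c) - F (b, c)) (F (a, d) - F (b, d)) = \<bar>rect_diff F a b c d\<bar>"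
  "dist (F (a, c) - F (a, d)) (F (b, c) - F (b, d)) = \<bar>rect_diff F a b c d\<bar>"
  by (simp_all add: dist_real_def rect_diff_def algebra_simps)

lemma rect_lipschitz_coons:
  assumes s: "grid_lines s" and t: "grid_lines t"
    and N: "grid_rect_lipschitz s t M N" and M: "0 \<le> M"
  shows "rect_lipschitz (3 * M) (coons s t N)"
proof -
  let ?C = "coons s t N"
  have s_step: "s (i + 1) \<noteq> s i" and t_step: "t (j + 1) \<noteq> t j" for i j
    using s t unfolding grid_lines_def by (metis order_less_irrefl)+
  have in_cell: "\<bar>rect_diff ?C x1 x2 y1 y2\<bar> \<le> 3 * M * \<bar>x1 - x2\<bar> * \<bar>y1 - y2\<bar>"
    if "x1 \<in> {s i..s (i + 1)}" "x2 \<in> {s i..s (i + 1)}" "y1 \<in> {t j..t (j + 1)}" "y2 \<in> {t j..t (j + 1)}"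
    for i j x1 x2 y1 y2
  proof -
    have "rect_diff ?C x1 x2 y1 y2 = rect_diff (coons_cell s t N i j) x1 x2 y1 y2"
      using that by (simp add: rect_diff_def coons_eq_coons_cell_closed[OF s t, of i _ j])
    then show ?thesis
      using rect_lipschitz_coons_cell[OF N] s_step t_step by (simp add: rect_lipschitz_def)
  qed
  have in_column: "\<bar>rect_diff ?C x1 x2 y1 y2\<bar> \<le> 3 * M * \<bar>x1 - x2\<bar> * \<bar>y1 - y2\<bar>"
    if "x1 \<in> {s i..s (i + 1)}" "x2 \<in> {s i..s (i + 1)}" for i x1 x2 y1 y2
  proof -
    have "(3 * M * \<bar>x1 - x2\<bar>)-lipschitz_on UNIV (\<lambda>y. ?C (x1, y) - ?C (x2, y))"
      using t
    proof (rule lipschitz_on_UNIV_if_lipschitz_on_cells)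
      show "(3 * M * \<bar>x1 - x2\<bar>)-lipschitz_on {t j..t (j + 1)} (\<lambda>y. ?C (x1, y) - ?C (x2, y))" for j
        using in_cell[OF that] M
        by (intro lipschitz_onI) (unfold dist_diff_rect_diff, unfold dist_real_def, auto)
    qed
    from lipschitz_onD[OF this, of y1 y2] show ?thesis
      unfolding dist_diff_rect_diff by (simp add: dist_real_def)
  qed
  show ?thesis
    unfolding rect_lipschitz_def
  proof (intro allI)
    fix x1 x2 y1 y2
    have "(3 * M * \<bar>y1 - y2\<bar>)-lipschitz_on UNIV (\<lambda>x. ?C (x, y1) - ?C (x, y2))"
      using s
    proof (rule lipschitz_on_UNIV_if_lipschitz_on_cells)
      show "(3 * M * \<bar>y1 - y2\<bar>)-lipschitz_on {s i..s (i + 1)} (\<lambda>x. ?C (x, y1) - ?C (x, y2))" for i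
        using in_column M
        by (intro lipschitz_onI) (unfold dist_diff_rect_diff, unfold dist_real_def, auto simp: mult_ac)
    qed
    from lipschitz_onD[OF this, of x1 x2]
    show "\<bar>rect_diff ?C x1 x2 y1 y2\<bar> \<le> 3 * M * \<bar>x1 - x2\<bar> * \<bar>y1 - y2\<bar>"
      unfolding dist_diff_rect_diff by (simp add: dist_real_def mult_ac)
  qed
qed

section \<open>Interpolation error of the Coons patch\<close>

lemma linear_interpolation_dist_sum_le:
  fixes a b x :: real
  assumes "a \<le> x" "x \<le> b" "a < b"
  shows "(b - x) / (b - a) * (x - a) + (x - a) / (b - a) * (b - x) \<le> (b - a) / 2"
proof -
  have h: "0 < b - a" using assms(3) by simp
  have "(b - x) / (b - a) * (x - a) + (x - a) / (b - a) * (b - x) = 2 * ((b - x) * (x - a)) / (b - a)"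
    unfolding times_divide_eq_left add_divide_distrib[symmetric] by (simp add: algebra_simps)
  also have "\<dots> \<le> (b - a) * (b - a) / 2 / (b - a)"
    using h zero_le_power2[of "(b - x) - (x - a)"]
    by (intro divide_right_mono) (simp_all add: power2_eq_square algebra_simps)
  also have "\<dots> = (b - a) / 2"
    using h by (simp add: field_simps)
  finally show ?thesis .
qed

lemma coons_cell_remainder:
  fixes s t :: "int \<Rightarrow> real" and F :: "real \<times> real \<Rightarrow> real" and i j :: int and x y :: real
  defines "a0 \<equiv> (s (i + 1) - x) / (s (i + 1) - s i)" and "a1 \<equiv> (x - s i) / (s (i + 1) - s i)"
    and "b0 \<equiv> (t (j + 1) - y) / (t (j + 1) - t j)" and "b1 \<equiv> (y - t j) / (t (j + 1) - t j)"
  assumes "s (i + 1) \<noteq> s i" "t (j + 1) \<noteq> t j"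
  shows "F (x, y) - coons_cell s t F i j (x, y) =
      a0 * b0 * rect_diff F x (s i) y (t j) + a0 * b1 * rect_diff F x (s i) y (t (j + 1))
      + a1 * b0 * rect_diff F x (s (i + 1)) y (t j) + a1 * b1 * rect_diff F x (s (i + 1)) y (t (j + 1))"
proof -
  have a1: "a1 = 1 - a0" and b1: "b1 = 1 - b0"
    using assms(5,6) by (simp_all add: a0_def a1_def b0_def b1_def field_simps)
  have "coons_cell s t F i j (x, y) =
      a0 * F (s i, y) + a1 * F (s (i + 1), y) + b0 * F (x, t j) + b1 * F (x, t (j + 1))
      - (a0 * (b0 * F (s i, t j) + b1 * F (s i, t (j + 1)))
         + a1 * (b0 * F (s (i + 1), t j) + b1 * F (s (i + 1), t (j + 1))))"
    by (simp add: coons_cell_def Let_def a0_def a1_def b0_def b1_def)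
  then show ?thesis
    by (simp add: rect_diff_def a1 b1 algebra_simps)
qed

lemma coons_cell_error:
  assumes F: "rect_lipschitz K F" and K: "0 \<le> K"
    and x: "s i \<le> x" "x \<le> s (i + 1)" "s i < s (i + 1)"
    and y: "t j \<le> y" "y \<le> t (j + 1)" "t j < t (j + 1)"
  shows "\<bar>F (x, y) - coons_cell s t F i j (x, y)\<bar> \<le> K * (s (i + 1) - s i) * (t (j + 1) - t j) / 4"
proof -
  define h1 h2 where "h1 = s (i + 1) - s i" and "h2 = t (j + 1) - t j"
  define a0 a1 b0 b1 where "a0 = (s (i + 1) - x) / h1" and "a1 = (x - s i) / h1"
    and "b0 = (t (j + 1) - y) / h2" and "b1 = (y - t j) / h2"
  define R00 R01 R10 R11 where "R00 = rect_diff F x (s i) y (t j)"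
    and "R01 = rect_diff F x (s i) y (t (j + 1))" and "R10 = rect_diff F x (s (i + 1)) y (t j)"
    and "R11 = rect_diff F x (s (i + 1)) y (t (j + 1))"
  have weights: "0 \<le> a0" "0 \<le> a1" "0 \<le> b0" "0 \<le> b1"
    using x y by (simp_all add: a0_def a1_def b0_def b1_def h1_def h2_def)
  have R: "\<bar>R00\<bar> \<le> K * (x - s i) * (y - t j)" "\<bar>R01\<bar> \<le> K * (x - s i) * (t (j + 1) - y)"
    "\<bar>R10\<bar> \<le> K * (s (i + 1) - x) * (y - t j)" "\<bar>R11\<bar> \<le> K * (s (i + 1) - x) * (t (j + 1) - y)"
    using F x y unfolding rect_lipschitz_def R00_def R01_def R10_def R11_def
    by (metis abs_of_nonneg abs_minus_commute diff_ge_0_iff_ge)+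
  have "F (x, y) - coons_cell s t F i j (x, y) = a0 * b0 * R00 + a0 * b1 * R01 + a1 * b0 * R10 + a1 * b1 * R11"
    using coons_cell_remainder x(3) y(3)
    unfolding a0_def a1_def b0_def b1_def h1_def h2_def R00_def R01_def R10_def R11_def by simp
  also have "\<bar>\<dots>\<bar> \<le> \<bar>a0 * b0 * R00\<bar> + \<bar>a0 * b1 * R01\<bar> + \<bar>a1 * b0 * R10\<bar> + \<bar>a1 * b1 * R11\<bar>"
    by linarith
  also have "\<dots> = a0 * b0 * \<bar>R00\<bar> + a0 * b1 * \<bar>R01\<bar> + a1 * b0 * \<bar>R10\<bar> + a1 * b1 * \<bar>R11\<bar>"
    using weights by (simp add: abs_mult)
  also have "\<dots> \<le> a0 * b0 * (K * (x - s i) * (y - t j)) + a0 * b1 * (K * (x - s i) * (t (j + 1) - y))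
      + a1 * b0 * (K * (s (i + 1) - x) * (y - t j)) + a1 * b1 * (K * (s (i + 1) - x) * (t (j + 1) - y))"
    using R weights by (intro add_mono mult_left_mono) simp_all
  also have "\<dots> = K * (a0 * (x - s i) + a1 * (s (i + 1) - x)) * (b0 * (y - t j) + b1 * (t (j + 1) - y))"
    by (simp add: algebra_simps)
  also have "\<dots> \<le> K * (h1 / 2) * (h2 / 2)"
    using linear_interpolation_dist_sum_le[OF x] linear_interpolation_dist_sum_le[OF y] weights x y K
    unfolding a0_def a1_def b0_def b1_def h1_def h2_def
    by (intro mult_mono) (auto simp: mult_ac)
  finally show ?thesis by (simp add: h1_def h2_def)
qed

lemma coons_error:
  assumes s: "grid_lines s" and t: "grid_lines t"
    and F: "rect_lipschitz K F" and K: "0 \<le> K"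
    and bdd_s: "bdd_above (range (\<lambda>i. s (i + 1) - s i))"
    and bdd_t: "bdd_above (range (\<lambda>j. t (j + 1) - t j))"
  shows "\<bar>coons s t F (x, y) - F (x, y)\<bar> \<le> K * (max_step s * max_step t) / 4"
proof -
  define i j where "i = cell_idx s x" and "j = cell_idx t y"
  have x: "s i \<le> x" "x \<le> s (i + 1)" "s i < s (i + 1)"
    using cell_idx_bounds[OF s, of x] by (auto simp: i_def)
  have y: "t j \<le> y" "y \<le> t (j + 1)" "t j < t (j + 1)"
    using cell_idx_bounds[OF t, of y] by (auto simp: j_def)
  have "s (i + 1) - s i \<le> max_step s" "t (j + 1) - t j \<le> max_step t"
    unfolding max_step_def using bdd_s bdd_t by (auto intro: cSUP_upper)
  then have "K * (s (i + 1) - s i) * (t (j + 1) - t j) \<le> K * (max_step s * max_step t)"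
    using K x y by (simp add: mult.assoc mult_left_mono mult_mono)
  moreover have "coons s t F (x, y) = coons_cell s t F i j (x, y)"
    by (simp add: coons_eq_coons_cell i_def j_def)
  ultimately show ?thesis
    using coons_cell_error[OF F K x y] by (simp add: abs_minus_commute)
qed

section \<open>Corner cutting\<close>

lemma weights_W_bounds:
  assumes "weights_W \<alpha> \<beta>"
  shows "0 < \<alpha> i" "\<alpha> i < \<beta> i" "\<beta> i < 1"
proof -
  obtain \<delta> where "0 < \<delta>" "\<delta> \<le> \<alpha> i" "\<delta> \<le> 1 - \<beta> i" "\<delta> \<le> \<beta> i - \<alpha> i"
    using assms unfolding weights_W_def by blast
  then show "0 < \<alpha> i" "\<alpha> i < \<beta> i" "\<beta> i < 1" by linarith+
qed

declare cc_lines.simps(2) [simp del]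

lemma cc_lines_Suc_interlace:
  assumes s: "grid_lines (cc_lines \<alpha> \<beta> s0 k)" and W: "weights_W (\<alpha> k) (\<beta> k)"
  shows "cc_lines \<alpha> \<beta> s0 k i < cc_lines \<alpha> \<beta> s0 (Suc k) (2 * i)"
    and "cc_lines \<alpha> \<beta> s0 (Suc k) (2 * i) < cc_lines \<alpha> \<beta> s0 (Suc k) (2 * i + 1)"
    and "cc_lines \<alpha> \<beta> s0 (Suc k) (2 * i + 1) < cc_lines \<alpha> \<beta> s0 k (i + 1)"
proof -
  let ?s = "cc_lines \<alpha> \<beta> s0 k"
  define h where "h = ?s (i + 1) - ?s i"
  have h: "0 < h" using s by (simp add: grid_lines_def h_def)
  note w = weights_W_bounds[OF W, of i]
  have odd_div: "(2 * i + 1) div 2 = i" by presburger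
  have "cc_lines \<alpha> \<beta> s0 (Suc k) (2 * i) = ?s i + \<alpha> k i * h"
    and "cc_lines \<alpha> \<beta> s0 (Suc k) (2 * i + 1) = ?s i + \<beta> k i * h"
    using odd_div by (simp_all add: cc_lines.simps Let_def h_def algebra_simps)
  moreover have "?s (i + 1) = ?s i + h" by (simp add: h_def)
  moreover have "0 < \<alpha> k i * h" using w(1) h by (rule mult_pos_pos)
  moreover have "\<alpha> k i * h < \<beta> k i * h" using w(2) h by (rule mult_strict_right_mono)
  moreover have "\<beta> k i * h < 1 * h" using w(3) h by (rule mult_strict_right_mono)
  ultimately show "?s i < cc_lines \<alpha> \<beta> s0 (Suc k) (2 * i)"
    and "cc_lines \<alpha> \<beta> s0 (Suc k) (2 * i) < cc_lines \<alpha> \<beta> s0 (Suc k) (2 * i + 1)"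
    and "cc_lines \<alpha> \<beta> s0 (Suc k) (2 * i + 1) < ?s (i + 1)"
    by linarith+
qed

lemma grid_lines_cc_lines:
  assumes s0: "grid_lines s0" and W: "\<And>k. weights_W (\<alpha> k) (\<beta> k)"
  shows "grid_lines (cc_lines \<alpha> \<beta> s0 k)"
proof (induction k)
  case 0
  show ?case using s0 by simp
next
  case (Suc k)
  let ?s = "cc_lines \<alpha> \<beta> s0 k" and ?s' = "cc_lines \<alpha> \<beta> s0 (Suc k)"
  note interlace = cc_lines_Suc_interlace[OF Suc W]
  have "?s' n < ?s' (n + 1)" for n
  proof (cases "even n")
    case True
    then obtain i where "n = 2 * i" by blast
    then show ?thesis using interlace(2) by simp
  next
    case False
    then obtain i where n: "n = 2 * i + 1" by (blast elim: oddE)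
    have "?s' (2 * i + 1) < ?s (i + 1)" "?s (i + 1) < ?s' (2 * (i + 1))"
      using interlace(3,1) by blast+
    then show ?thesis by (simp add: n algebra_simps)
  qed
  moreover have "\<exists>n. ?s' n > x" for x
  proof -
    obtain i where "?s i > x" using Suc unfolding grid_lines_def by blast
    then have "?s' (2 * i) > x" using interlace(1)[of i] by linarith
    then show ?thesis ..
  qed
  moreover have "\<exists>n. ?s' n < x" for x
  proof -
    obtain i where "?s i < x" using Suc unfolding grid_lines_def by blast
    moreover have "?s' (2 * (i - 1)) < ?s i"
      using interlace(2,3)[of "i - 1"] by simp
    ultimately have "?s' (2 * (i - 1)) < x" by linarith
    then show ?thesis ..
  qed
  ultimately show ?case unfolding grid_lines_def by blast
qed

lemma bdd_above_cc_lines_steps: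
  assumes s0: "grid_lines s0" and W: "\<And>k. weights_W (\<alpha> k) (\<beta> k)"
    and bdd: "bdd_above (range (\<lambda>i. s0 (i + 1) - s0 i))"
  shows "bdd_above (range (\<lambda>i. cc_lines \<alpha> \<beta> s0 k (i + 1) - cc_lines \<alpha> \<beta> s0 k i))"
proof (induction k)
  case 0
  show ?case using bdd by simp
next
  case (Suc k)
  let ?s = "cc_lines \<alpha> \<beta> s0 k" and ?s' = "cc_lines \<alpha> \<beta> s0 (Suc k)"
  obtain B where B: "\<And>i. ?s (i + 1) - ?s i \<le> B"
    using Suc unfolding bdd_above_def by blast
  have s: "grid_lines ?s" using grid_lines_cc_lines[of s0 \<alpha> \<beta>, OF s0 W] .
  note interlace = cc_lines_Suc_interlace[OF s W]
  have enclosed: "\<exists>i. ?s i < ?s' n \<and> ?s' (n + 1) < ?s (i + 1 + 1)" for n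
  proof (cases "even n")
    case True
    then obtain i where n: "n = 2 * i" by blast
    have "?s (i + 1) < ?s (i + 1 + 1)"
      using s by (simp only: grid_lines_def)
    then show ?thesis
      using interlace(1,3)[of i] by (intro exI[of _ i]) (simp add: n)
  next
    case False
    then obtain i where n: "n = 2 * i + 1" by (blast elim: oddE)
    have "?s' (n + 1) = ?s' (2 * (i + 1))"
      by (simp add: n algebra_simps)
    then show ?thesis
      using interlace(1,2)[of i] interlace(2,3)[of "i + 1"]
      by (intro exI[of _ i]) (simp add: n)
  qed
  have "?s' (n + 1) - ?s' n \<le> 2 * B" for n
  proof -
    obtain i where "?s i < ?s' n" "?s' (n + 1) < ?s (i + 1 + 1)"
      using enclosed by blast
    then show ?thesis using B[of i] B[of "i + 1"] by linarith
  qed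
  then show ?case by (intro bdd_aboveI2)
qed

section \<open>Reduction to one coordinate\<close>

lemma coons_inner: "coons s t N p \<bullet> b = coons s t (\<lambda>q. N q \<bullet> b) p"
  by (cases p) (simp add: coons_def Let_def inner_add_left inner_diff_left)

lemma cc_net_inner:
  "cc_net \<alpha>s \<beta>s \<alpha>t \<beta>t s0 t0 N0 k p \<bullet> b = cc_net \<alpha>s \<beta>s \<alpha>t \<beta>t s0 t0 (\<lambda>q. N0 q \<bullet> b) k p"
  by (induction k arbitrary: p) (simp_all add: coons_inner)

lemma infnorm_leI:
  fixes x :: "'a::euclidean_space"
  assumes "\<And>b. b \<in> Basis \<Longrightarrow> \<bar>x \<bullet> b\<bar> \<le> c"
  shows "infnorm x \<le> c"
  unfolding infnorm_Max using assms by (auto intro: Max.boundedI)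

lemma BMSDD_nonneg:
  assumes "grid_lines s" "grid_lines t" "BMSDD s t N L"
  shows "0 \<le> L"
proof -
  have "s 0 \<noteq> s 1" "t 0 \<noteq> t 1"
    using assms(1,2) unfolding grid_lines_def by (metis add_0 order_less_irrefl)+
  then have "infnorm (div_diff (s 0) (s 1) (t 0) (t 1) N) \<le> L"
    using assms(3) unfolding BMSDD_def grid_def by blast
  then show ?thesis using infnorm_pos_le order_trans by blast
qed

lemma BMSDD_component_grid_rect_lipschitz:
  fixes N :: "real \<times> real \<Rightarrow> 'a::euclidean_space"
  assumes N: "BMSDD s t N L" and b: "b \<in> Basis"
  shows "grid_rect_lipschitz s t L (\<lambda>q. N q \<bullet> b)"
proof -
  have on_grid: "\<bar>rect_diff (\<lambda>q. N q \<bullet> b) \<sigma>1 \<sigma>2 \<tau>1 \<tau>2\<bar> \<le> L * \<bar>\<sigma>1 - \<sigma>2\<bar> * \<bar>\<tau>1 - \<tau>2\<bar>"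
    if "(\<sigma>1, \<tau>1) \<in> grid s t" "(\<sigma>1, \<tau>2) \<in> grid s t" "(\<sigma>2, \<tau>1) \<in> grid s t" "(\<sigma>2, \<tau>2) \<in> grid s t"
    for \<sigma>1 \<sigma>2 \<tau>1 \<tau>2
  proof (cases "\<sigma>1 = \<sigma>2 \<or> \<tau>1 = \<tau>2")
    case True
    then show ?thesis by (auto simp: rect_diff_def)
  next
    case False
    then have "\<bar>div_diff \<sigma>1 \<sigma>2 \<tau>1 \<tau>2 N \<bullet> b\<bar> \<le> L"
      using N that Basis_le_infnorm[OF b] unfolding BMSDD_def by (blast intro: order_trans)
    moreover have "div_diff \<sigma>1 \<sigma>2 \<tau>1 \<tau>2 N \<bullet> b
        = rect_diff (\<lambda>q. N q \<bullet> b) \<sigma>1 \<sigma>2 \<tau>1 \<tau>2 / ((\<sigma>1 - \<sigma>2) * (\<tau>1 - \<tau>2))"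
      by (simp add: div_diff_def rect_diff_def inner_add_left inner_diff_left)
    ultimately show ?thesis
      using False by (simp add: abs_mult divide_le_eq mult_ac)
  qed
  show ?thesis
    unfolding grid_rect_lipschitz_def by (intro conjI allI on_grid) (auto simp: grid_def)
qed

lemma grid_rect_lipschitz_cc_net:
  assumes s0: "grid_lines s0" and t0: "grid_lines t0"
    and Ws: "\<And>k. weights_W (\<alpha>s k) (\<beta>s k)" and Wt: "\<And>k. weights_W (\<alpha>t k) (\<beta>t k)"
    and N0: "grid_rect_lipschitz s0 t0 L N0" and L: "0 \<le> L"
  shows "grid_rect_lipschitz (cc_lines \<alpha>s \<beta>s s0 k) (cc_lines \<alpha>t \<beta>t t0 k) (3 ^ k * L)
           (cc_net \<alpha>s \<beta>s \<alpha>t \<beta>t s0 t0 N0 k)"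
proof (induction k)
  case 0
  show ?case using N0 by simp
next
  case (Suc k)
  have "rect_lipschitz (3 * (3 ^ k * L))
      (coons (cc_lines \<alpha>s \<beta>s s0 k) (cc_lines \<alpha>t \<beta>t t0 k) (cc_net \<alpha>s \<beta>s \<alpha>t \<beta>t s0 t0 N0 k))"
    using grid_lines_cc_lines[of s0 \<alpha>s \<beta>s, OF s0 Ws] grid_lines_cc_lines[of t0 \<alpha>t \<beta>t, OF t0 Wt] Suc L
    by (intro rect_lipschitz_coons) simp_all
  then show ?case by (simp add: rect_lipschitz_imp_grid_rect_lipschitz mult.assoc)
qed

theorem theorem4:
  fixes N0 :: "real \<times> real \<Rightarrow> 'a::euclidean_space"
    and \<alpha>s \<beta>s \<alpha>t \<beta>t :: "nat \<Rightarrow> int \<Rightarrow> real"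
    and L :: real and k :: nat
  assumes "net_C0 real_of_int real_of_int N0"
    and "BMSDD real_of_int real_of_int N0 L"
    and "\<And>k. weights_W (\<alpha>s k) (\<beta>s k)"
    and "\<And>k. weights_W (\<alpha>t k) (\<beta>t k)"
  shows "\<forall>x y. infnorm
      (coons (cc_lines \<alpha>s \<beta>s real_of_int (Suc k)) (cc_lines \<alpha>t \<beta>t real_of_int (Suc k))
         (cc_net \<alpha>s \<beta>s \<alpha>t \<beta>t real_of_int real_of_int N0 (Suc k)) (x, y)
     - coons (cc_lines \<alpha>s \<beta>s real_of_int k) (cc_lines \<alpha>t \<beta>t real_of_int k)
         (cc_net \<alpha>s \<beta>s \<alpha>t \<beta>t real_of_int real_of_int N0 k) (x, y))
    \<le> 3 ^ (k + 1) * L * (max_step (cc_lines \<alpha>s \<beta>s real_of_int (Suc k))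
                          * max_step (cc_lines \<alpha>t \<beta>t real_of_int (Suc k))) / 4"
proof (intro allI infnorm_leI)
  fix x y and b :: 'a
  assume b: "b \<in> Basis"
  let ?S = "cc_lines \<alpha>s \<beta>s real_of_int" and ?T = "cc_lines \<alpha>t \<beta>t real_of_int"
  let ?Nb = "cc_net \<alpha>s \<beta>s \<alpha>t \<beta>t real_of_int real_of_int (\<lambda>q. N0 q \<bullet> b)"
  note Z = grid_lines_of_int
  have L: "0 \<le> L" using BMSDD_nonneg[OF Z Z assms(2)] .
  have S: "grid_lines (?S m)" and T: "grid_lines (?T m)" for m
    using grid_lines_cc_lines[of real_of_int, OF Z] assms(3,4) by blast+
  have unit_steps: "bdd_above (range (\<lambda>i. real_of_int (i + 1) - real_of_int i))" by simp
  have bdd_S: "bdd_above (range (\<lambda>i. ?S m (i + 1) - ?S m i))" for m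
    using bdd_above_cc_lines_steps[OF Z assms(3) unit_steps] .
  have bdd_T: "bdd_above (range (\<lambda>i. ?T m (i + 1) - ?T m i))" for m
    using bdd_above_cc_lines_steps[OF Z assms(4) unit_steps] .
  have "grid_rect_lipschitz (?S k) (?T k) (3 ^ k * L) (?Nb k)"
    using grid_rect_lipschitz_cc_net[OF Z Z assms(3,4) BMSDD_component_grid_rect_lipschitz[OF assms(2) b] L] .
  from rect_lipschitz_coons[OF S T this] L
  have "rect_lipschitz (3 ^ (k + 1) * L) (?Nb (Suc k))" by (simp add: mult.assoc)
  from coons_error[OF S T this _ bdd_S bdd_T] L
  show "\<bar>(coons (?S (Suc k)) (?T (Suc k)) (cc_net \<alpha>s \<beta>s \<alpha>t \<beta>t real_of_int real_of_int N0 (Suc k)) (x, y)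
      - coons (?S k) (?T k) (cc_net \<alpha>s \<beta>s \<alpha>t \<beta>t real_of_int real_of_int N0 k) (x, y)) \<bullet> b\<bar>
    \<le> 3 ^ (k + 1) * L * (max_step (?S (Suc k)) * max_step (?T (Suc k))) / 4"
    by (simp add: inner_diff_left coons_inner cc_net_inner)
qed

end
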